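(* Let $F$ be an infinite field and $n\ge3$. Let $z_1,\dots,z_k$ be distinct variables of degrees $g_1,\dots,g_k\in\{1,\dots,n-1\}$ with $g_1+\dots+g_k\le n-1$, and $y_1,\dots,y_t$ distinct variables of degree $0$. Then the pairwise distinct commutators $$[z_1,a^{(1)}_1y_1,\dots,a^{(1)}_ty_t,z_{\sigma(2)},a^{(2)}_1y_1,\dots,a^{(2)}_ty_t,\dots,z_{\sigma(k)},a^{(k)}_1y_1,\dots,a^{(k)}_ty_t],$$ with $\sigma\in S_k$, $\sigma(1)=1$ and $a^{(s)}_i\ge0$, are linearly independent modulo the $T_{\mathbb{Z}_n}$-ideal $I$ of graded identities of $UT_n(F)^{(-)}$.
   Context: $UT_n(F)^{(-)}$: $n\times n$ upper triangular matrices with bracket $[a,b]=ab-ba$ and canonical $\mathbb{Z}_n$-grading (degree-$k$ component spanned by $e_{ij}$, $j-i=k$); nonzero elements of $\mathbb{Z}_n$ are identified with $1,\dots,n-1$. $I$ is the set of polynomials in the free $\mathbb{Z}_n$-graded Lie algebra vanishing on $UT_n(F)^{(-)}$ under degree-respecting substitutions. Commutators are left normed; $ay$ inside a commutator means $y$ repeated $a$ times consecutively. *)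

theory Defs
  imports "HOL-Combinatorics.Permutations"
begin

(* n x n matrices over 'a are represented as functions nat => nat => 'a;
   indices are 0-based, matrix entries outside {0..<n} x {0..<n} are required to be 0
   by the grading predicate below. *)
type_synonym 'a mat = "nat \<Rightarrow> nat \<Rightarrow> 'a"

definition mmult :: "nat \<Rightarrow> 'a::comm_ring_1 mat \<Rightarrow> 'a mat \<Rightarrow> 'a mat" where
  "mmult n A B = (\<lambda>i j. \<Sum>l<n. A i l * B l j)"

definition lbr :: "nat \<Rightarrow> 'a::comm_ring_1 mat \<Rightarrow> 'a mat \<Rightarrow> 'a mat" where
  "lbr n A B = (\<lambda>i j. mmult n A B i j - mmult n B A i j)"

fun lcomm :: "nat \<Rightarrow> 'a::comm_ring_1 mat list \<Rightarrow> 'a mat" where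
  "lcomm n [] = (\<lambda>i j. 0)"
| "lcomm n (x # xs) = foldl (lbr n) x xs"

(* A lies in the degree-d component of the canonical Z_n-grading of UT_n(F):
   it is a linear combination of the e_ij with j - i = d *)
definition homog :: "nat \<Rightarrow> nat \<Rightarrow> 'a::zero mat \<Rightarrow> bool" where
  "homog n d A \<longleftrightarrow> (\<forall>i j. A i j \<noteq> 0 \<longrightarrow> i < n \<and> j < n \<and> j = i + d)"

(* variables: Z s = z_(s+1) (degree g s), Y i = y_(i+1) (degree 0) *)
datatype var = Z nat | Y nat

definition eval_word :: "nat \<Rightarrow> (var \<Rightarrow> 'a::comm_ring_1 mat) \<Rightarrow> var list \<Rightarrow> 'a mat" where
  "eval_word n \<phi> w = lcomm n (map \<phi> w)"

(* the commutator  [z_1, a^(1)_1 y_1, ..., a^(1)_t y_t, z_sigma(2), ..., z_sigma(k), a^(k)_1 y_1, ..., a^(k)_t y_t]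
   as a word (0-indexed) *)
definition comm_word :: "nat \<Rightarrow> nat \<Rightarrow> (nat \<Rightarrow> nat) \<Rightarrow> (nat \<Rightarrow> nat \<Rightarrow> nat) \<Rightarrow> var list" where
  "comm_word k t \<sigma> a =
     concat (map (\<lambda>s. Z (\<sigma> s) # concat (map (\<lambda>i. replicate (a s i) (Y i)) [0..<t])) [0..<k])"

definition comm_words :: "nat \<Rightarrow> nat \<Rightarrow> var list set" where
  "comm_words k t = {comm_word k t \<sigma> a | \<sigma> a. \<sigma> permutes {..<k} \<and> \<sigma> 0 = 0}"

definition graded_subst :: "nat \<Rightarrow> nat \<Rightarrow> (nat \<Rightarrow> nat) \<Rightarrow> nat \<Rightarrow> (var \<Rightarrow> 'a::zero mat) \<Rightarrow> bool" where
  "graded_subst n k g t \<phi> \<longleftrightarrow>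
     (\<forall>s<k. homog n (g s) (\<phi> (Z s))) \<and> (\<forall>i<t. homog n 0 (\<phi> (Y i)))"

end

theory Submission
  imports Defs "HOL-Computational_Algebra.Polynomial"
begin

text \<open>
  Fix a word with nonzero coefficient and let \<open>\<tau>\<close> be its permutation. Let p_m be the sum of the
  degrees of z_\<tau>(0), ..., z_\<tau>(m-1), and substitute z_\<tau>(m) by the matrix unit e_(p_m, p_(m+1)) and
  y_i by diag(v_i) with v_i(0) = 0; this is graded because the degrees sum to less than n.
  A left-normed commutator then has a nonzero (0, p_k) entry only if it walks the staircase
  p_0 < p_1 < ... < p_k in the order of \<open>\<tau>\<close>, and each y_i after the s-th step contributes the factor
  v_i(p_(s+1)). The identity thus becomes a polynomial identity in the free values v_i(p_(s+1)) whose
  monomials are the exponent patterns of the words with permutation \<open>\<tau>\<close>, and over an infinite field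
  distinct monomials are linearly independent.
\<close>

definition emat :: "'a::zero \<Rightarrow> nat \<Rightarrow> nat \<Rightarrow> 'a mat" where
  "emat c p q = (\<lambda>i j. if i = p \<and> j = q then c else 0)"

definition diag_mat :: "nat \<Rightarrow> (nat \<Rightarrow> 'a::zero) \<Rightarrow> 'a mat" where
  "diag_mat n v = (\<lambda>i j. if i = j \<and> i < n then v i else 0)"

lemma emat_zero [simp]: "emat 0 p q = (\<lambda>i j. 0)"
  by (simp add: emat_def)

lemma mmult_emat_left:
  assumes "q < n"
  shows "mmult n (emat c p q) B i j = (if i = p then c * B q j else 0)"
proof -
  have "mmult n (emat c p q) B i j = (\<Sum>l<n. if l = q then (if i = p then c * B l j else 0) else 0)"
    unfolding mmult_def emat_def by (rule sum.cong) auto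
  then show ?thesis using assms by simp
qed

lemma mmult_emat_right:
  assumes "p < n"
  shows "mmult n B (emat c p q) i j = (if j = q then B i p * c else 0)"
proof -
  have "mmult n B (emat c p q) i j = (\<Sum>l<n. if l = p then (if j = q then B i l * c else 0) else 0)"
    unfolding mmult_def emat_def by (rule sum.cong) auto
  then show ?thesis using assms by simp
qed

lemma lbr_emat_diag_mat:
  assumes "p < n" "q < n"
  shows "lbr n (emat c p q) (diag_mat n v) = emat (c * (v q - v p)) p q"
  using assms by (simp add: fun_eq_iff lbr_def mmult_emat_left mmult_emat_right)
    (auto simp: emat_def diag_mat_def algebra_simps)

lemma lbr_emat_emat:
  assumes "p < n" "q < n" "s \<noteq> p"
  shows "lbr n (emat c p q) (emat b r s) = emat (if q = r then c * b else 0) p s"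
  using assms by (simp add: fun_eq_iff lbr_def mmult_emat_left mmult_emat_right) (auto simp: emat_def)

lemma foldl_lbr_diag_mats:
  assumes "p < n" "q < n"
  shows "foldl (lbr n) (emat c p q) (map (diag_mat n) vs) = emat (c * (\<Prod>v\<leftarrow>vs. v q - v p)) p q"
  using assms by (induction vs arbitrary: c) (simp_all add: lbr_emat_diag_mat mult.assoc)

lemma coeff_eq_0_if_sum_powers_vanish:
  fixes d :: "nat \<Rightarrow> 'a::field"
  assumes "infinite (UNIV :: 'a set)" "finite M" "\<And>z. (\<Sum>m\<in>M. d m * z ^ m) = 0" "m \<in> M"
  shows "d m = 0"
proof -
  define p where "p = (\<Sum>m\<in>M. monom (d m) m)"
  have "poly p z = 0" for z
    using assms(3) by (simp add: p_def poly_sum poly_monom)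
  then have "p = 0"
    using poly_roots_finite[of p] assms(1) by auto
  moreover have "coeff p m = d m"
    using assms(2,4) by (simp add: p_def coeff_sum coeff_monom)
  ultimately show ?thesis by simp
qed

lemma monomials_linear_independent:
  fixes c :: "'b \<Rightarrow> 'a::field" and f :: "'b \<Rightarrow> 'e \<Rightarrow> nat"
  assumes "infinite (UNIV :: 'a set)" "finite S" "finite B"
    and "\<And>b b'. b \<in> B \<Longrightarrow> b' \<in> B \<Longrightarrow> (\<forall>e\<in>S. f b e = f b' e) \<Longrightarrow> b = b'"
    and "\<And>x. (\<Sum>b\<in>B. c b * (\<Prod>e\<in>S. x e ^ f b e)) = 0"
    and "b \<in> B"
  shows "c b = 0"
  using assms(2-)
proof (induction S arbitrary: B b rule: finite_induct)
  case empty
  then have "B = {b}" by blast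
  then show ?case using empty.prems(3) by simp
next
  case (insert e S)
  define layer where "layer m = {b \<in> B. f b e = m}" for m
  have layer_vanishes: "(\<Sum>b\<in>layer m. c b * (\<Prod>e'\<in>S. y e' ^ f b e')) = 0"
    if "m \<in> (\<lambda>b. f b e) ` B" for m y
  proof (rule coeff_eq_0_if_sum_powers_vanish[OF assms(1) _ _ that])
    show "finite ((\<lambda>b. f b e) ` B)" using insert.prems(1) by simp
    fix z
    have "0 = (\<Sum>b\<in>B. c b * (\<Prod>e'\<in>insert e S. (y(e := z)) e' ^ f b e'))"
      using insert.prems(3) by simp
    also have "\<dots> = (\<Sum>b\<in>B. z ^ f b e * (c b * (\<Prod>e'\<in>S. y e' ^ f b e')))"
    proof (intro sum.cong refl)
      fix b
      have "(\<Prod>e'\<in>S. (y(e := z)) e' ^ f b e') = (\<Prod>e'\<in>S. y e' ^ f b e')"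
        using insert.hyps(2) by (intro prod.cong) auto
      then show "c b * (\<Prod>e'\<in>insert e S. (y(e := z)) e' ^ f b e') = z ^ f b e * (c b * (\<Prod>e'\<in>S. y e' ^ f b e'))"
        using insert.hyps by (simp add: algebra_simps)
    qed
    also have "\<dots> = (\<Sum>m\<in>(\<lambda>b. f b e) ` B. \<Sum>b\<in>layer m. z ^ f b e * (c b * (\<Prod>e'\<in>S. y e' ^ f b e')))"
      unfolding layer_def by (rule sum.group[symmetric]) (use insert.prems(1) in auto)
    also have "\<dots> = (\<Sum>m\<in>(\<lambda>b. f b e) ` B. (\<Sum>b\<in>layer m. c b * (\<Prod>e'\<in>S. y e' ^ f b e')) * z ^ m)"
    proof (intro sum.cong refl)
      fix m
      show "(\<Sum>b\<in>layer m. z ^ f b e * (c b * (\<Prod>e'\<in>S. y e' ^ f b e')))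
          = (\<Sum>b\<in>layer m. c b * (\<Prod>e'\<in>S. y e' ^ f b e')) * z ^ m"
        unfolding sum_distrib_right by (intro sum.cong refl) (simp add: layer_def)
    qed
    finally show "(\<Sum>m\<in>(\<lambda>b. f b e) ` B. (\<Sum>b\<in>layer m. c b * (\<Prod>e'\<in>S. y e' ^ f b e')) * z ^ m) = 0"
      by simp
  qed
  show ?case
  proof (rule insert.IH)
    show "finite (layer (f b e))" using insert.prems(1) by (simp add: layer_def)
    show "b \<in> layer (f b e)" using insert.prems(4) by (simp add: layer_def)
    show "(\<Sum>b'\<in>layer (f b e). c b' * (\<Prod>e'\<in>S. x e' ^ f b' e')) = 0" for x
      using layer_vanishes insert.prems(4) by blast
    show "b' = b''" if "b' \<in> layer (f b e)" "b'' \<in> layer (f b e)" "\<forall>e'\<in>S. f b' e' = f b'' e'" for b' b''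
      using insert.prems(2) that by (auto simp: layer_def)
  qed
qed

definition comm_block :: "nat \<Rightarrow> (nat \<Rightarrow> nat) \<Rightarrow> (nat \<Rightarrow> nat \<Rightarrow> nat) \<Rightarrow> nat \<Rightarrow> var list" where
  "comm_block t \<sigma> a s = Z (\<sigma> s) # map Y (concat (map (\<lambda>i. replicate (a s i) i) [0..<t]))"

lemma comm_word_eq_concat_blocks: "comm_word k t \<sigma> a = concat (map (comm_block t \<sigma> a) [0..<k])"
  unfolding comm_word_def comm_block_def by (simp add: map_concat o_def)

lemma comm_word_cong:
  assumes "\<forall>s<k. \<sigma> s = \<sigma>' s" "\<forall>s<k. \<forall>i<t. a s i = a' s i"
  shows "comm_word k t \<sigma> a = comm_word k t \<sigma>' a'"
  using assms unfolding comm_word_def by (auto intro!: arg_cong[where f = concat] map_cong)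

lemma prod_list_map_replicate_blocks:
  "prod_list (map f (concat (map (\<lambda>i. replicate (a i) i) [0..<t]))) = (\<Prod>i<t. f i ^ a i)"
  by (induction t) (simp_all add: map_concat prod_list.append)

locale staircase =
  fixes n k :: nat and g \<tau> :: "nat \<Rightarrow> nat"
  assumes tau_permutes: "\<tau> permutes {..<k}" and tau_0: "\<tau> 0 = 0" and k_pos: "0 < k"
    and deg_pos: "\<And>s. s < k \<Longrightarrow> 0 < g s" and deg_sum: "(\<Sum>s<k. g s) < n"
begin

definition pos :: "nat \<Rightarrow> nat" where
  "pos m = (\<Sum>r<m. g (\<tau> r))"

lemma pos_0 [simp]: "pos 0 = 0" and pos_Suc: "pos (Suc m) = pos m + g (\<tau> m)"
  by (simp_all add: pos_def)

lemma tau_less: "s < k \<Longrightarrow> \<tau> s < k"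
  using tau_permutes permutes_in_image by fastforce

lemma inv_tau_less: "m < k \<Longrightarrow> inv \<tau> m < k"
  using permutes_inv[OF tau_permutes] permutes_in_image by fastforce

lemma pos_strict_mono: "s < s' \<Longrightarrow> s' \<le> k \<Longrightarrow> pos s < pos s'"
proof (induction s')
  case (Suc s')
  then show ?case using deg_pos[OF tau_less, of s'] by (cases "s = s'") (auto simp: pos_Suc)
qed simp

lemma pos_eq_iff: "s \<le> k \<Longrightarrow> s' \<le> k \<Longrightarrow> pos s = pos s' \<longleftrightarrow> s = s'"
  using pos_strict_mono[of s s'] pos_strict_mono[of s' s] by (cases s s' rule: linorder_cases) auto

lemma pos_less_n: "m \<le> k \<Longrightarrow> pos m < n"
proof -
  have "pos k = (\<Sum>s\<in>\<tau> ` {..<k}. g s)"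
    unfolding pos_def by (simp add: sum.reindex permutes_inj_on[OF tau_permutes])
  then have "pos k < n" using deg_sum permutes_image[OF tau_permutes] by simp
  then show "m \<le> k \<Longrightarrow> pos m < n" using pos_strict_mono[of m k] by (cases "m = k") auto
qed

definition subst :: "(nat \<Rightarrow> nat \<Rightarrow> 'a::comm_ring_1) \<Rightarrow> var \<Rightarrow> 'a mat" where
  "subst v x = (case x of
      Z m \<Rightarrow> if m < k then emat 1 (pos (inv \<tau> m)) (pos (Suc (inv \<tau> m))) else (\<lambda>i j. 0)
    | Y i \<Rightarrow> diag_mat n (\<lambda>j. v j i))"

lemma graded_subst_subst: "graded_subst n k g t (subst v)"
  unfolding graded_subst_def
proof (intro conjI allI impI)
  fix m assume "m < k"
  moreover have "\<tau> (inv \<tau> m) = m" by (rule permutes_inverses(1)[OF tau_permutes])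
  ultimately show "homog n (g m) (subst v (Z m))"
    using pos_less_n[of "Suc (inv \<tau> m)"] inv_tau_less[of m]
    by (auto simp: subst_def homog_def emat_def pos_Suc)
qed (auto simp: subst_def homog_def diag_mat_def)

lemma foldl_lbr_comm_block:
  assumes "m < k" "\<sigma> m < k" "\<And>i. v 0 i = 0"
  shows "foldl (lbr n) (emat c 0 (pos m)) (map (subst v) (comm_block t \<sigma> a m))
       = emat (if \<sigma> m = \<tau> m then c * (\<Prod>i<t. v (pos (Suc m)) i ^ a m i) else 0) 0 (pos (Suc m))"
proof -
  define j where "j = inv \<tau> (\<sigma> m)"
  define ys where "ys = concat (map (\<lambda>i. replicate (a m i) i) [0..<t])"
  have j: "j < k" using inv_tau_less[OF assms(2)] by (simp add: j_def)
  have j_eq_iff: "j = m \<longleftrightarrow> \<sigma> m = \<tau> m"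
    using permutes_inverses[OF tau_permutes] unfolding j_def by metis
  have "pos (Suc j) \<noteq> 0" using pos_strict_mono[of 0 "Suc j"] j by simp
  then have first: "lbr n (emat c 0 (pos m)) (subst v (Z (\<sigma> m)))
      = emat (if m = j then c else 0) 0 (pos (Suc j))"
    using assms(1,2) j pos_less_n[of m] pos_eq_iff[of m j]
    by (simp add: subst_def j_def[symmetric] lbr_emat_emat)
  have ys: "map (subst v) (map Y ys) = map (diag_mat n) (map (\<lambda>i j. v j i) ys)"
    by (simp add: subst_def)
  have "foldl (lbr n) (emat c 0 (pos m)) (map (subst v) (comm_block t \<sigma> a m))
      = foldl (lbr n) (emat (if m = j then c else 0) 0 (pos (Suc j))) (map (diag_mat n) (map (\<lambda>i j. v j i) ys))"
    unfolding comm_block_def ys_def[symmetric] list.map(2) foldl_Cons first ys ..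
  also have "\<dots> = emat ((if m = j then c else 0) * (\<Prod>i<t. v (pos (Suc j)) i ^ a m i)) 0 (pos (Suc j))"
    unfolding foldl_lbr_diag_mats[OF pos_less_n[of 0] pos_less_n[OF Suc_leI[OF j]], simplified]
    by (simp add: ys_def assms(3) prod_list_map_replicate_blocks)
  finally show ?thesis using j_eq_iff by auto
qed

lemma foldl_lbr_comm_blocks:
  assumes "\<sigma> permutes {..<k}" "\<And>i. v 0 i = 0" "m \<le> k"
  shows "foldl (lbr n) (emat 1 0 0) (map (subst v) (concat (map (comm_block t \<sigma> a) [0..<m])))
       = emat (if \<forall>s<m. \<sigma> s = \<tau> s then \<Prod>s<m. \<Prod>i<t. v (pos (Suc s)) i ^ a s i else 0) 0 (pos m)"
  using assms(3)
proof (induction m)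
  case (Suc m)
  have "\<sigma> m < k" using assms(1) permutes_in_image Suc.prems by fastforce
  then show ?case
    using Suc foldl_lbr_comm_block[of m \<sigma> v] assms(2) by (auto simp: less_Suc_eq)
qed simp

lemma eval_comm_word_subst:
  assumes "\<sigma> permutes {..<k}" "\<sigma> 0 = 0" "\<And>i. v 0 i = 0"
  shows "eval_word n (subst v) (comm_word k t \<sigma> a) 0 (pos k)
       = (if \<forall>s<k. \<sigma> s = \<tau> s then \<Prod>s<k. \<Prod>i<t. v (pos (Suc s)) i ^ a s i else 0)"
proof -
  obtain rest where word: "comm_word k t \<sigma> a = Z 0 # rest"
    using k_pos assms(2) by (simp add: comm_word_eq_concat_blocks upt_conv_Cons comm_block_def)
  have "subst v (Z 0) = emat 1 0 (pos 1)"
    using k_pos permutes_inverses(2)[OF tau_permutes, of 0] by (simp add: subst_def tau_0)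
  then have "lbr n (emat 1 0 0) (subst v (Z 0)) = subst v (Z 0)"
    using deg_pos[OF k_pos] pos_less_n[of 0] by (simp add: lbr_emat_emat pos_Suc tau_0)
  then have "eval_word n (subst v) (comm_word k t \<sigma> a)
      = foldl (lbr n) (emat 1 0 0) (map (subst v) (comm_word k t \<sigma> a))"
    unfolding eval_word_def word list.map lcomm.simps foldl_Cons by simp
  then show ?thesis
    using foldl_lbr_comm_blocks[of \<sigma> v k t a] assms by (simp add: comm_word_eq_concat_blocks emat_def)
qed

lemma obtain_diag_values:
  fixes x :: "nat \<times> nat \<Rightarrow> 'a::zero"
  obtains v where "\<And>i. v 0 i = 0" and "\<And>s i. s < k \<Longrightarrow> v (pos (Suc s)) i = x (s, i)"
proof
  have inj: "inj_on (pos \<circ> Suc) {..<k}" by (rule inj_onI) (simp add: pos_eq_iff)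
  define v where "v j i = (if j \<in> (pos \<circ> Suc) ` {..<k} then x (inv_into {..<k} (pos \<circ> Suc) j, i) else 0)"
    for j i
  have "0 \<notin> (pos \<circ> Suc) ` {..<k}"
  proof
    assume "0 \<in> (pos \<circ> Suc) ` {..<k}"
    then obtain s where "s < k" "pos (Suc s) = 0" by auto
    then show False using pos_strict_mono[of 0 "Suc s"] by simp
  qed
  then show "v 0 i = 0" for i
    by (simp add: v_def)
  show "v (pos (Suc s)) i = x (s, i)" if "s < k" for s i
    using inv_into_f_f[OF inj, of s] that by (auto simp: v_def)
qed

text \<open>Exponent pattern of a word with permutation \<open>\<tau>\<close>; arbitrary for other words.\<close>

definition exps :: "nat \<Rightarrow> var list \<Rightarrow> nat \<Rightarrow> nat \<Rightarrow> nat" where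
  "exps t w = (SOME a. w = comm_word k t \<tau> a)"

lemma comm_word_exps:
  assumes "w \<in> range (comm_word k t \<tau>)"
  shows "comm_word k t \<tau> (exps t w) = w"
proof -
  from assms have "\<exists>a. w = comm_word k t \<tau> a" by blast
  then have "w = comm_word k t \<tau> (SOME a. w = comm_word k t \<tau> a)" by (rule someI_ex)
  then show ?thesis unfolding exps_def ..
qed

lemma sum_eval_subst:
  assumes "finite W" "W \<subseteq> comm_words k t" "\<And>i. v 0 i = 0"
  shows "(\<Sum>w\<in>W. c w * eval_word n (subst v) w 0 (pos k))
       = (\<Sum>w\<in>W \<inter> range (comm_word k t \<tau>). c w * (\<Prod>s<k. \<Prod>i<t. v (pos (Suc s)) i ^ exps t w s i))"
  unfolding sum.inter_restrict[OF assms(1)]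
proof (rule sum.cong[OF refl])
  fix w assume "w \<in> W"
  then obtain \<sigma> a where \<sigma>: "\<sigma> permutes {..<k}" "\<sigma> 0 = 0" and w: "w = comm_word k t \<sigma> a"
    using assms(2) by (auto simp: comm_words_def)
  show "c w * eval_word n (subst v) w 0 (pos k) = (if w \<in> range (comm_word k t \<tau>)
      then c w * (\<Prod>s<k. \<Prod>i<t. v (pos (Suc s)) i ^ exps t w s i) else 0)"
  proof (cases "w \<in> range (comm_word k t \<tau>)")
    case True
    then show ?thesis
      using eval_comm_word_subst[of \<tau> v t "exps t w"] tau_permutes tau_0 assms(3) by (simp add: comm_word_exps)
  next
    case False
    then have "\<not> (\<forall>s<k. \<sigma> s = \<tau> s)"
      using comm_word_cong[of k \<sigma> \<tau> t a a] w by auto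
    then have "eval_word n (subst v) w 0 (pos k) = 0"
      unfolding w eval_comm_word_subst[of \<sigma> v t a, OF \<sigma> assms(3)] by (rule if_not_P)
    with False show ?thesis by simp
  qed
qed

lemma exps_inj:
  assumes "w \<in> range (comm_word k t \<tau>)" "w' \<in> range (comm_word k t \<tau>)"
    and "\<forall>e\<in>{..<k} \<times> {..<t}. exps t w (fst e) (snd e) = exps t w' (fst e) (snd e)"
  shows "w = w'"
  using assms comm_word_cong[of k \<tau> \<tau> t "exps t w" "exps t w'"] comm_word_exps by auto

lemma graded_identity_imp_monomial_identity:
  fixes c :: "var list \<Rightarrow> 'a::comm_ring_1" and x :: "nat \<times> nat \<Rightarrow> 'a"
  assumes "finite W" "W \<subseteq> comm_words k t"
    and "\<And>\<phi>. graded_subst n k g t \<phi> \<Longrightarrow> (\<Sum>w\<in>W. c w * eval_word n \<phi> w 0 (pos k)) = 0"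
  shows "(\<Sum>w\<in>W \<inter> range (comm_word k t \<tau>). c w * (\<Prod>e\<in>{..<k} \<times> {..<t}. x e ^ exps t w (fst e) (snd e))) = 0"
proof -
  obtain v where v0: "\<And>i. v 0 i = 0" and v: "\<And>s i. s < k \<Longrightarrow> v (pos (Suc s)) i = x (s, i)"
    using obtain_diag_values[of x] by blast
  have "0 = (\<Sum>w\<in>W. c w * eval_word n (subst v) w 0 (pos k))"
    using assms(3)[OF graded_subst_subst] by simp
  also have "\<dots> = (\<Sum>w\<in>W \<inter> range (comm_word k t \<tau>). c w * (\<Prod>s<k. \<Prod>i<t. v (pos (Suc s)) i ^ exps t w s i))"
    using assms(1,2) v0 by (rule sum_eval_subst)
  also have "\<dots> = (\<Sum>w\<in>W \<inter> range (comm_word k t \<tau>). c w * (\<Prod>e\<in>{..<k} \<times> {..<t}. x e ^ exps t w (fst e) (snd e)))"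
    by (simp add: v prod.cartesian_product case_prod_beta)
  finally show ?thesis ..
qed

end

theorem mainTheorem16:
  fixes n k t :: nat and g :: "nat \<Rightarrow> nat" and c :: "var list \<Rightarrow> 'a::field"
  assumes "infinite (UNIV :: 'a set)"
    and "n \<ge> 3" and "k \<ge> 1"
    and "\<forall>s<k. 1 \<le> g s \<and> g s \<le> n - 1"
    and "(\<Sum>s<k. g s) \<le> n - 1"
    and "finite {w. c w \<noteq> 0}"
    and "{w. c w \<noteq> 0} \<subseteq> comm_words k t"
    and "\<forall>\<phi> :: var \<Rightarrow> 'a mat. graded_subst n k g t \<phi> \<longrightarrow>
           (\<forall>i j. (\<Sum>w\<in>{w. c w \<noteq> 0}. c w * eval_word n \<phi> w i j) = 0)"
  shows "\<forall>w. c w = 0"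
proof (rule ccontr)
  define W where "W = {w. c w \<noteq> 0}"
  assume "\<not> (\<forall>w. c w = 0)"
  then obtain w0 where w0: "c w0 \<noteq> 0" by blast
  then obtain \<tau> a0 where "\<tau> permutes {..<k}" "\<tau> 0 = 0" and w0_eq: "w0 = comm_word k t \<tau> a0"
    using assms(7) by (auto simp: comm_words_def)
  then interpret staircase n k g \<tau>
    using assms(2-5) by unfold_locales auto
  have "c w0 = 0"
  proof (rule monomials_linear_independent[OF assms(1),
        where S = "{..<k} \<times> {..<t}" and f = "\<lambda>w e. exps t w (fst e) (snd e)"])
    show "finite (W \<inter> range (comm_word k t \<tau>))" using assms(6) by (simp add: W_def)
    show "w0 \<in> W \<inter> range (comm_word k t \<tau>)" using w0 w0_eq by (simp add: W_def)
    show "(\<Sum>w\<in>W \<inter> range (comm_word k t \<tau>). c w * (\<Prod>e\<in>{..<k} \<times> {..<t}. x e ^ exps t w (fst e) (snd e))) = 0"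
      for x
      using assms(6-8) by (intro graded_identity_imp_monomial_identity) (simp_all add: W_def)
  qed (auto intro: exps_inj)
  with w0 show False ..
qed

end
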